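(* In the setting below, assume each $f_i$ is $L_i$-smooth, $B_f(x,y)\ge\frac{\mu_f}{2}\|x-y\|^2$ for all $x,y$ for some $\mu_f\ge0$, $\psi$ satisfies the $\mu_\psi$-condition, and $\eta_k\le\frac1{2n\sqrt{\bar LL^*}}$ for all $k\in[K]$. Then for any permutations and every $k\in[K]$, $$\|x_{k+1}-x_*\|^2\le\frac{\|x_*-x_1\|^2}{\prod_{s=1}^k\big(1+n\eta_s(\mu_f+2\mu_\psi)\big)}+\sum_{\ell=1}^k\frac{8n\eta_\ell^3R_\ell}{\prod_{s=\ell}^k\big(1+n\eta_s(\mu_f+2\mu_\psi)\big)},$$ where $R_\ell=\sum_{i=2}^n\frac{L_{\sigma_\ell^i}}{n}\Big\|\sum_{j=1}^{i-1}\nabla f_{\sigma_\ell^j}(x_* )\Big\|^2$.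
   Context: Setting. Let $n,d\in\mathbb N$, let $f_1,\dots,f_n:\mathbb R^d\to\mathbb R$ be convex, $f=\frac1n\sum_{i=1}^nf_i$, let $\psi:\mathbb R^d\to\mathbb R\cup\{+\infty\}$ be proper, closed and convex, and $F=f+\psi$. For a convex function $g$, $\nabla g(x)$ denotes an element of $\partial g(x)$, and $B_g(x,y)=g(x)-g(y)-\langle\nabla g(y),x-y\rangle$. The $\mu_\psi$-condition: $\mu_\psi\ge0$ and $B_\psi(x,y)\ge\frac{\mu_\psi}{2}\|x-y\|^2$ for all $x,y$ with $\partial\psi(y)\neq\emptyset$ and every choice of $\nabla\psi(y)\in\partial\psi(y)$. Assume there is $x_*\in\mathbb R^d$ with $F(x_* )=\inf_{x}F(x)\in\mathbb R$. Proximal shuffling gradient method: given $x_1\in\mathrm{dom}\,\psi$, a number of epochs $K\ge2$ and stepsizes $\eta_k>0$, for $k=1,\dots,K$: choose a permutation $\sigma_k=(\sigma_k^1,\dots,\sigma_k^n)$ of $[n]=\{1,\dots,n\}$; set $x_k^1=x_k$ and $x_k^{i+1}=x_k^i-\eta_k\nabla f_{\sigma_k^i}(x_k^i)$ for $i=1,\dots,n$; set $x_{k+1}=\arg\min_{x\in\mathbb R^d}\{n\psi(x)+\frac{1}{2\eta_k}\|x-x_k^{n+1}\|^2\}$. Smoothness: each $f_i$ is differentiable with $\|\nabla f_i(x)-\nabla f_i(y)\|\le L_i\|x-y\|$ for all $x,y$, $L_i>0$; $\bar L=\frac1n\sum_iL_i$, $L^*=\max_iL_i$. *)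

theory Defs
  imports "HOL-Analysis.Analysis"
begin

definition epigraph_ext :: "('a \<Rightarrow> ereal) \<Rightarrow> ('a \<times> real) set" where
  "epigraph_ext \<psi> = {(x, t). \<psi> x \<le> ereal t}"

definition proper_fun :: "('a \<Rightarrow> ereal) \<Rightarrow> bool" where
  "proper_fun \<psi> \<longleftrightarrow> (\<forall>x. \<psi> x \<noteq> -\<infinity>) \<and> (\<exists>x. \<psi> x \<noteq> \<infinity>)"

definition closed_fun :: "('a::topological_space \<Rightarrow> ereal) \<Rightarrow> bool" where
  "closed_fun \<psi> \<longleftrightarrow> closed (epigraph_ext \<psi>)"

definition convex_fun :: "('a::real_vector \<Rightarrow> ereal) \<Rightarrow> bool" where
  "convex_fun \<psi> \<longleftrightarrow> convex (epigraph_ext \<psi>)"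

definition subgrad :: "('a::real_inner \<Rightarrow> ereal) \<Rightarrow> 'a \<Rightarrow> 'a \<Rightarrow> bool" where
  "subgrad \<psi> y g \<longleftrightarrow> \<psi> y \<noteq> \<infinity> \<and> \<psi> y \<noteq> -\<infinity> \<and>
     (\<forall>x. \<psi> y + ereal (inner g (x - y)) \<le> \<psi> x)"

text \<open>mu_psi-condition: B_psi(x,y) \<ge> mu/2 |x-y|^2 for all x, all y with nonempty
  subdifferential and every subgradient at y.\<close>
definition mu_condition :: "('a::real_inner \<Rightarrow> ereal) \<Rightarrow> real \<Rightarrow> bool" where
  "mu_condition \<psi> \<mu> \<longleftrightarrow> \<mu> \<ge> 0 \<and>
     (\<forall>x y g. subgrad \<psi> y g \<longrightarrow>
        \<psi> y + ereal (inner g (x - y) + \<mu> / 2 * (norm (x - y))\<^sup>2) \<le> \<psi> x)"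

end

theory Submission
  imports Defs
begin

(*
  One epoch is compared with the optimality condition at x\<star>, where -\<nabla>f(x\<star>) is a subgradient
  of \<psi>. Summing the three-point inequality of the convex L_i-smooth f_i over the epoch, and adding
  strong convexity of f and the \<mu>\<psi>-condition both at the proximal output and at x\<star>, gives the
  contraction factor 1 + n\<eta>(\<mu>f + 2\<mu>\<psi>) up to the drift \<eta> \<Sigma>_i L_(\<sigma> i) |x_(k+1) - x_k^i|^2 of
  the inner iterates. Writing x_k^i through partial sums of gradients, the gradient differences
  in the drift are absorbed by the cocoercivity terms of the three-point inequality (this is where
  the step-size bound enters), and only the partial sums of the gradients at x\<star> survive, giving
  the error 8n\<eta>^3 R. Unrolling the one-epoch recursion yields the bound.
*)

lemma norm_add_sq: "(norm (a + b))\<^sup>2 = (norm a)\<^sup>2 + 2 * inner a b + (norm (b::'a::real_inner))\<^sup>2"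
  using dot_norm[of a b] by simp

lemma gderiv_along_line:
  fixes \<phi> :: "'a::real_inner \<Rightarrow> real"
  assumes "\<And>z. GDERIV \<phi> z :> G z"
  shows "((\<lambda>s. \<phi> (v + s *\<^sub>R d)) has_real_derivative inner (G (v + t *\<^sub>R d)) d) (at t)"
proof -
  have line: "((\<lambda>s. v + s *\<^sub>R d) has_derivative (\<lambda>s. s *\<^sub>R d)) (at t)"
    by (auto intro!: derivative_eq_intros)
  have "(\<phi> has_derivative (\<lambda>h. inner h (G (v + t *\<^sub>R d)))) (at (v + t *\<^sub>R d))"
    using assms unfolding gderiv_def by simp
  from has_derivative_compose[OF line this]
  have "((\<lambda>s. \<phi> (v + s *\<^sub>R d)) has_derivative (*) (inner (G (v + t *\<^sub>R d)) d)) (at t)"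
    by (rule has_derivative_eq_rhs) (auto simp: o_def inner_commute)
  then show ?thesis by (simp add: has_field_derivative_def)
qed

lemma descent_lemma:
  fixes \<phi> :: "'a::real_inner \<Rightarrow> real"
  assumes gd: "\<And>z. GDERIV \<phi> z :> G z"
    and lip: "\<And>u w. norm (G u - G w) \<le> L * norm (u - w)"
  shows "\<phi> (v + d) \<le> \<phi> v + inner (G v) d + L / 2 * (norm d)\<^sup>2"
proof -
  define h where "h s = \<phi> (v + s *\<^sub>R d) - s * inner (G v) d - L / 2 * s^2 * (norm d)\<^sup>2" for s
  have "h 1 \<le> h 0"
  proof (rule DERIV_nonpos_imp_nonincreasing[of 0 1 h])
    fix t :: real assume t: "0 \<le> t" "t \<le> 1"
    have "(h has_real_derivative inner (G (v + t *\<^sub>R d) - G v) d - L * t * (norm d)\<^sup>2) (at t)"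
      unfolding h_def
      by (rule gderiv_along_line[OF gd] derivative_eq_intros refl)+
        (simp add: power2_eq_square algebra_simps inner_diff_left)
    moreover have "inner (G (v + t *\<^sub>R d) - G v) d \<le> L * t * (norm d)\<^sup>2"
    proof -
      have "inner (G (v + t *\<^sub>R d) - G v) d \<le> norm (G (v + t *\<^sub>R d) - G v) * norm d"
        by (rule norm_cauchy_schwarz)
      also have "\<dots> \<le> L * norm (t *\<^sub>R d) * norm d"
        using lip[of "v + t *\<^sub>R d" v] by (simp add: mult_right_mono)
      finally show ?thesis using t by (simp add: power2_eq_square mult_ac)
    qed
    ultimately show "\<exists>y. DERIV h t :> y \<and> y \<le> 0" by force
  qed simp
  then show ?thesis by (simp add: h_def)
qed

lemma convex_gderiv_above_tangent:
  fixes \<phi> :: "'a::real_inner \<Rightarrow> real"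
  assumes gd: "\<And>z. GDERIV \<phi> z :> G z" and cv: "convex_on UNIV \<phi>"
  shows "\<phi> y \<ge> \<phi> x + inner (G x) (y - x)"
proof -
  define g where "g t = \<phi> (x + t *\<^sub>R (y - x))" for t
  have "convex_on UNIV g"
  proof
    fix t a b :: real assume "t > 0" "t < 1"
    then have "g ((1 - t) *\<^sub>R a + t *\<^sub>R b)
        = \<phi> ((1 - t) *\<^sub>R (x + a *\<^sub>R (y - x)) + t *\<^sub>R (x + b *\<^sub>R (y - x)))"
      by (simp add: g_def algebra_simps)
    also have "\<dots> \<le> (1 - t) * g a + t * g b"
      unfolding g_def using \<open>t > 0\<close> \<open>t < 1\<close> by (intro convex_onD[OF cv]) auto
    finally show "g ((1 - t) *\<^sub>R a + t *\<^sub>R b) \<le> (1 - t) * g a + t * g b" .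
  qed simp
  moreover have "(g has_real_derivative inner (G x) (y - x)) (at 0)"
    unfolding g_def using gderiv_along_line[OF gd, of x "y - x" 0] by simp
  ultimately have "g 1 - g 0 \<ge> inner (G x) (y - x) * (1 - 0)"
    by (intro convex_on_imp_above_tangent) auto
  then show ?thesis by (simp add: g_def)
qed

lemma convex_smooth_cocoercive:
  fixes \<phi> :: "'a::real_inner \<Rightarrow> real"
  assumes gd: "\<And>z. GDERIV \<phi> z :> G z"
    and lip: "\<And>u w. norm (G u - G w) \<le> L * norm (u - w)"
    and L: "L > 0"
    and cv: "convex_on UNIV \<phi>"
  shows "\<phi> y \<ge> \<phi> x + inner (G x) (y - x) + (norm (G y - G x))\<^sup>2 / (2 * L)"
proof -
  \<comment> \<open>compare the tangent at x with the descent step from y along the gradient difference\<close>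
  define w where "w = y - (1 / L) *\<^sub>R (G y - G x)"
  have "\<phi> w \<ge> \<phi> x + inner (G x) (w - x)"
    by (rule convex_gderiv_above_tangent[OF gd cv])
  moreover have "\<phi> (y + (w - y)) \<le> \<phi> y + inner (G y) (w - y) + L / 2 * (norm (w - y))\<^sup>2"
    by (rule descent_lemma[OF gd lip])
  moreover have "inner (G x) (w - x) = inner (G x) (y - x) + inner (G x) (w - y)"
    by (simp add: inner_diff_right)
  moreover have "inner (G y - G x) (w - y) = - (norm (G y - G x))\<^sup>2 / L"
    by (simp add: w_def power2_norm_eq_inner)
  moreover have "norm (w - y) = norm (G y - G x) / L"
    using L by (simp add: w_def)
  moreover have "L / 2 * (norm (G y - G x) / L)\<^sup>2 = (norm (G y - G x))\<^sup>2 / (2 * L)"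
    using L by (simp add: power2_eq_square field_simps)
  ultimately show ?thesis by (simp add: inner_diff_left field_simps)
qed

lemma convex_smooth_three_point:
  fixes \<phi> :: "'a::real_inner \<Rightarrow> real"
  assumes gd: "\<And>z. GDERIV \<phi> z :> G z"
    and lip: "\<And>u w. norm (G u - G w) \<le> L * norm (u - w)"
    and L: "L > 0"
    and cv: "convex_on UNIV \<phi>"
  shows "inner (G p) (x - z) \<ge> \<phi> x - \<phi> z - L / 2 * (norm (x - p))\<^sup>2 + (norm (G z - G p))\<^sup>2 / (2 * L)"
proof -
  have "\<phi> (p + (x - p)) \<le> \<phi> p + inner (G p) (x - p) + L / 2 * (norm (x - p))\<^sup>2"
    by (rule descent_lemma[OF gd lip])
  moreover have "\<phi> z \<ge> \<phi> p + inner (G p) (z - p) + (norm (G z - G p))\<^sup>2 / (2 * L)"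
    by (rule convex_smooth_cocoercive[OF gd lip L cv])
  moreover have "inner (G p) (x - p) - inner (G p) (z - p) = inner (G p) (x - z)"
    by (simp add: inner_diff_right)
  ultimately show ?thesis by simp
qed

lemma le_of_forall_le_add_mult:
  fixes a b c :: real
  assumes "c \<ge> 0" and "\<And>t. 0 < t \<Longrightarrow> t \<le> 1 \<Longrightarrow> a \<le> b + c * t"
  shows "a \<le> b"
proof (rule field_le_epsilon)
  fix e :: real assume "e > 0"
  define t where "t = min 1 (e / (c + 1))"
  have t: "0 < t" "t \<le> 1" using \<open>e > 0\<close> \<open>c \<ge> 0\<close> by (auto simp: t_def)
  have "c * t \<le> (c + 1) * (e / (c + 1))"
    using \<open>c \<ge> 0\<close> t by (intro mult_mono) (auto simp: t_def)
  also have "\<dots> = e" using \<open>c \<ge> 0\<close> by simp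
  finally show "a \<le> b + e" using assms(2)[OF t] by linarith
qed

lemma proper_fun_finite:
  assumes "proper_fun \<psi>" "\<psi> x \<noteq> \<infinity>"
  obtains r where "\<psi> x = ereal r"
  using assms by (cases "\<psi> x") (auto simp: proper_fun_def)

lemma convex_fun_le_convex_combination:
  assumes cv: "convex_fun \<psi>" and a: "\<psi> a \<le> ereal A" and b: "\<psi> b \<le> ereal B"
    and t: "0 \<le> t" "t \<le> 1"
  shows "\<psi> ((1 - t) *\<^sub>R a + t *\<^sub>R b) \<le> ereal ((1 - t) * A + t * B)"
proof -
  have "(a, A) \<in> epigraph_ext \<psi>" "(b, B) \<in> epigraph_ext \<psi>"
    using a b by (auto simp: epigraph_ext_def)
  then have "(1 - t) *\<^sub>R (a, A) + t *\<^sub>R (b, B) \<in> epigraph_ext \<psi>"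
    using cv t unfolding convex_fun_def by (intro convexD) auto
  then show ?thesis by (simp add: epigraph_ext_def)
qed

lemma mu_conditionD:
  assumes "mu_condition \<psi> \<mu>" "subgrad \<psi> y g" "\<psi> y = ereal Y" "\<psi> x = ereal X"
  shows "Y + inner g (x - y) + \<mu> / 2 * (norm (x - y))\<^sup>2 \<le> X"
proof -
  have "\<psi> y + ereal (inner g (x - y) + \<mu> / 2 * (norm (x - y))\<^sup>2) \<le> \<psi> x"
    using assms(1,2) unfolding mu_condition_def by blast
  then show ?thesis using assms(3,4) by (simp add: add.assoc)
qed

lemma subgrad_of_minimizer:
  fixes \<psi> :: "'a::real_inner \<Rightarrow> ereal" and h :: "'a \<Rightarrow> real"
  assumes pr: "proper_fun \<psi>" and cv: "convex_fun \<psi>" and fin: "\<psi> p \<noteq> \<infinity>"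
    and min: "\<And>z. \<psi> p + ereal (h p) \<le> \<psi> z + ereal (h z)"
    and upper: "\<And>d. h (p + d) \<le> h p + inner g d + M * (norm d)\<^sup>2" and M: "M \<ge> 0"
  shows "subgrad \<psi> p (- g)"
proof -
  obtain P where P: "\<psi> p = ereal P" using proper_fun_finite[OF pr fin] .
  have "\<psi> p + ereal (inner (- g) (z - p)) \<le> \<psi> z" for z
  proof (cases "\<psi> z = \<infinity>")
    case False
    then obtain Z where Z: "\<psi> z = ereal Z" using proper_fun_finite[OF pr] by blast
    \<comment> \<open>compare p with the points of the segment towards z, then let them approach p\<close>
    have "P - Z \<le> inner g (z - p) + (M * (norm (z - p))\<^sup>2) * t" if t: "0 < t" "t \<le> 1" for t
    proof -
      define zt where "zt = p + t *\<^sub>R (z - p)"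
      have "\<psi> zt \<le> ereal ((1 - t) * P + t * Z)"
        unfolding zt_def using convex_fun_le_convex_combination[OF cv, of p P z Z t] P Z t
        by (simp add: algebra_simps)
      moreover have "ereal (P + h p) \<le> \<psi> zt + ereal (h zt)" using min[of zt] P by simp
      ultimately have "P + h p \<le> (1 - t) * P + t * Z + h zt"
        by (metis add_right_mono order.trans plus_ereal.simps(1) ereal_less_eq(3))
      moreover have "h zt \<le> h p + t * inner g (z - p) + M * (t^2 * (norm (z - p))\<^sup>2)"
        using upper[of "t *\<^sub>R (z - p)"] t by (simp add: zt_def power_mult_distrib)
      ultimately have "t * (P - Z) \<le> t * (inner g (z - p) + (M * (norm (z - p))\<^sup>2) * t)"
        by (simp add: power2_eq_square algebra_simps)
      then show ?thesis using t by simp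
    qed
    then have "P - Z \<le> inner g (z - p)"
      by (rule le_of_forall_le_add_mult[rotated]) (use M in auto)
    then show ?thesis using P Z by (simp add: inner_diff_right)
  qed simp
  then show ?thesis using P by (simp add: subgrad_def)
qed

lemma subgrad_of_prox:
  fixes \<psi> :: "'a::real_inner \<Rightarrow> ereal"
  assumes pr: "proper_fun \<psi>" and cv: "convex_fun \<psi>" and N: "N > 0" and \<eta>: "\<eta> > 0"
    and prox: "\<And>z. ereal N * \<psi> p + ereal (1 / (2 * \<eta>) * (norm (p - y))\<^sup>2)
                 \<le> ereal N * \<psi> z + ereal (1 / (2 * \<eta>) * (norm (z - y))\<^sup>2)"
  shows "subgrad \<psi> p ((1 / (N * \<eta>)) *\<^sub>R (y - p))"
proof -
  \<comment> \<open>after division by N, p minimises \<psi> plus the quadratic h\<close>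
  define h where "h z = (norm (z - y))\<^sup>2 / (2 * N * \<eta>)" for z
  obtain z0 where "\<psi> z0 \<noteq> \<infinity>" using pr by (auto simp: proper_fun_def)
  then obtain Z0 where Z0: "\<psi> z0 = ereal Z0" using proper_fun_finite[OF pr] by blast
  have fin: "\<psi> p \<noteq> \<infinity>"
  proof
    assume "\<psi> p = \<infinity>"
    with prox[of z0] Z0 N show False by simp
  qed
  then obtain P where P: "\<psi> p = ereal P" using proper_fun_finite[OF pr] by blast
  have min_h: "\<psi> p + ereal (h p) \<le> \<psi> z + ereal (h z)" for z
  proof (cases "\<psi> z = \<infinity>")
    case False
    then obtain Z where Z: "\<psi> z = ereal Z" using proper_fun_finite[OF pr] by blast
    have "N * P + (norm (p - y))\<^sup>2 / (2 * \<eta>) \<le> N * Z + (norm (z - y))\<^sup>2 / (2 * \<eta>)"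
      using prox[of z] P Z by simp
    then have "N * (P + h p) \<le> N * (Z + h z)"
      using N by (simp add: h_def field_simps)
    then show ?thesis using N P Z by simp
  qed simp
  have h_upper: "h (p + d) \<le> h p + inner ((1 / (N * \<eta>)) *\<^sub>R (p - y)) d + 1 / (2 * N * \<eta>) * (norm d)\<^sup>2" for d
  proof -
    have "p + d - y = (p - y) + d" by simp
    then show ?thesis using N \<eta> unfolding h_def by (simp only: norm_add_sq inner_scaleR_left) (simp add: field_simps)
  qed
  have "subgrad \<psi> p (- ((1 / (N * \<eta>)) *\<^sub>R (p - y)))"
    by (rule subgrad_of_minimizer[OF pr cv fin min_h h_upper]) (use N \<eta> in simp)
  then show ?thesis by (simp add: scaleR_diff_right)
qed

lemma norm_sum_sq_le_card_mult:
  "(norm (\<Sum>j\<in>I. v j))\<^sup>2 \<le> real (card I) * (\<Sum>j\<in>I. (norm (v j))\<^sup>2)"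
proof -
  have "(norm (\<Sum>j\<in>I. v j))\<^sup>2 \<le> (\<Sum>j\<in>I. norm (v j))\<^sup>2"
    by (rule power_mono[OF norm_sum norm_ge_zero])
  also have "\<dots> \<le> (\<Sum>j\<in>I. (norm (v j))\<^sup>2) * card I" by (rule sum_squared_le_sum_of_squares)
  finally show ?thesis by (simp only: mult.commute)
qed

lemma norm_add_sq_le: "(norm (a + b))\<^sup>2 \<le> 2 * (norm a)\<^sup>2 + 2 * (norm (b::'a::real_inner))\<^sup>2"
  using norm_add_sq[of a b] norm_add_sq[of a "- b"] zero_le_power2[of "norm (a - b)"] by simp

lemma shuffling_deviation_bound:
  fixes g h :: "nat \<Rightarrow> 'a::real_inner" and w :: "nat \<Rightarrow> real"
  assumes w_pos: "\<And>i. i \<in> {1..n} \<Longrightarrow> w i > 0" and w_le: "\<And>i. i \<in> {1..n} \<Longrightarrow> w i \<le> M"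
    and \<eta>: "\<eta> > 0"
    and step1: "2 * \<eta> * (\<Sum>i=1..n. w i) \<le> 1"
    and step2: "4 * \<eta>\<^sup>2 * n * M * (\<Sum>i=1..n. w i) \<le> 1"
  shows "\<eta> * (\<Sum>i=1..n. w i * (norm (x' - (x - \<eta> *\<^sub>R (\<Sum>j\<in>{1..<i}. g j))))\<^sup>2)
    \<le> (norm (x - x'))\<^sup>2 + \<eta> * (\<Sum>i=1..n. (norm (h i - g i))\<^sup>2 / w i)
       + 4 * \<eta> ^ 3 * (\<Sum>i=1..n. w i * (norm (\<Sum>j\<in>{1..<i}. h j))\<^sup>2)"
proof -
  define K where "K = (norm (x - x'))\<^sup>2"
  define T where "T = (\<Sum>i=1..n. (norm (h i - g i))\<^sup>2 / w i)"
  define W where "W = (\<Sum>i=1..n. w i)"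
  define D where "D i = (\<Sum>j\<in>{1..<i}. g j)" for i
  define H where "H i = (\<Sum>j\<in>{1..<i}. h j)" for i
  have T_ge: "(\<Sum>j=1..n. (norm (g j - h j))\<^sup>2) \<le> M * T"
    unfolding T_def sum_distrib_left
  proof (rule sum_mono)
    fix j assume j: "j \<in> {1..n}"
    have "(norm (g j - h j))\<^sup>2 = w j * ((norm (h j - g j))\<^sup>2 / w j)"
      using w_pos[OF j] by (simp add: norm_minus_commute)
    also have "\<dots> \<le> M * ((norm (h j - g j))\<^sup>2 / w j)"
      using w_pos[OF j] w_le[OF j] by (intro mult_right_mono) auto
    finally show "(norm (g j - h j))\<^sup>2 \<le> M * ((norm (h j - g j))\<^sup>2 / w j)" .
  qed
  have D_H: "(norm (D i - H i))\<^sup>2 \<le> n * M * T" if i: "i \<in> {1..n}" for i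
  proof -
    have "(norm (D i - H i))\<^sup>2 \<le> real (card {1..<i}) * (\<Sum>j\<in>{1..<i}. (norm (g j - h j))\<^sup>2)"
      unfolding D_def H_def sum_subtractf[symmetric] by (rule norm_sum_sq_le_card_mult)
    also have "\<dots> \<le> n * (\<Sum>j=1..n. (norm (g j - h j))\<^sup>2)"
      using i by (intro mult_mono sum_mono2 sum_nonneg) auto
    also have "\<dots> \<le> n * (M * T)" using T_ge by (simp add: mult_left_mono)
    finally show ?thesis by (simp add: mult_ac)
  qed
  \<comment> \<open>split each partial sum D i into gradient differences, paid for by T, and the sum H i at the optimum\<close>
  have point: "(norm (x' - (x - \<eta> *\<^sub>R D i)))\<^sup>2
      \<le> 2 * K + 4 * \<eta>\<^sup>2 * (n * M * T) + 4 * \<eta>\<^sup>2 * (norm (H i))\<^sup>2"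
    if i: "i \<in> {1..n}" for i
  proof -
    have "(norm (x' - (x - \<eta> *\<^sub>R D i)))\<^sup>2 \<le> 2 * (norm (x' - x))\<^sup>2 + 2 * (norm (\<eta> *\<^sub>R D i))\<^sup>2"
      using norm_add_sq_le[of "x' - x" "\<eta> *\<^sub>R D i"] by (simp add: algebra_simps)
    also have "(norm (\<eta> *\<^sub>R D i))\<^sup>2 = \<eta>\<^sup>2 * (norm ((D i - H i) + H i))\<^sup>2"
      using \<eta> by (simp add: power_mult_distrib)
    also have "\<dots> \<le> \<eta>\<^sup>2 * (2 * (n * M * T) + 2 * (norm (H i))\<^sup>2)"
      using norm_add_sq_le[of "D i - H i" "H i"] D_H[OF i]
      by (intro mult_left_mono) auto
    finally show ?thesis by (simp add: K_def norm_minus_commute algebra_simps)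
  qed
  have "\<eta> * (\<Sum>i=1..n. w i * (norm (x' - (x - \<eta> *\<^sub>R D i)))\<^sup>2)
      \<le> \<eta> * (\<Sum>i=1..n. w i * (2 * K + 4 * \<eta>\<^sup>2 * (n * M * T) + 4 * \<eta>\<^sup>2 * (norm (H i))\<^sup>2))"
    using \<eta> point w_pos by (intro mult_left_mono sum_mono) (auto intro: less_imp_le)
  also have "\<dots> = (2 * \<eta> * W) * K + (4 * \<eta>\<^sup>2 * n * M * W) * (\<eta> * T)
      + 4 * \<eta> ^ 3 * (\<Sum>i=1..n. w i * (norm (H i))\<^sup>2)"
    by (simp add: W_def algebra_simps sum.distrib sum_distrib_left sum_distrib_right power2_eq_square power3_eq_cube)
  also have "\<dots> \<le> K + \<eta> * T + 4 * \<eta> ^ 3 * (\<Sum>i=1..n. w i * (norm (H i))\<^sup>2)"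
  proof -
    have "0 \<le> T" unfolding T_def using w_pos by (intro sum_nonneg divide_nonneg_pos) auto
    then have "0 \<le> K" "0 \<le> \<eta> * T" using \<eta> by (auto simp: K_def)
    then show ?thesis
      using mult_right_mono[OF step1] mult_right_mono[OF step2] unfolding W_def by fastforce
  qed
  finally show ?thesis by (simp add: K_def T_def D_def H_def)
qed

lemma iterate_eq_partial_sum:
  fixes p g :: "nat \<Rightarrow> 'a::real_vector"
  assumes "p 1 = x" and "\<And>i. i \<in> {1..n} \<Longrightarrow> p (i + 1) = p i - \<eta> *\<^sub>R g i"
    and "1 \<le> i" "i \<le> n + 1"
  shows "p i = x - \<eta> *\<^sub>R (\<Sum>j\<in>{1..<i}. g j)"
  using assms(3,4)
proof (induction i)
  case (Suc i)
  show ?case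
  proof (cases "i = 0")
    case True
    then show ?thesis using assms(1) by simp
  next
    case False
    then have "i \<in> {1..n}" using Suc.prems by auto
    then have "p (Suc i) = (x - \<eta> *\<^sub>R (\<Sum>j\<in>{1..<i}. g j)) - \<eta> *\<^sub>R g i"
      using Suc assms(2)[of i] by simp
    then show ?thesis using False by (simp add: sum.op_ivl_Suc scaleR_add_right)
  qed
qed simp

context
  fixes n :: nat and f :: "nat \<Rightarrow> 'a::real_inner \<Rightarrow> real" and gf :: "nat \<Rightarrow> 'a \<Rightarrow> 'a"
    and L :: "nat \<Rightarrow> real"
  assumes conv_f: "\<And>i. i \<in> {1..n} \<Longrightarrow> convex_on UNIV (f i)"
    and grad_f: "\<And>i z. i \<in> {1..n} \<Longrightarrow> GDERIV (f i) z :> gf i z"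
    and L_pos: "\<And>i. i \<in> {1..n} \<Longrightarrow> L i > 0"
    and smooth: "\<And>i u v. i \<in> {1..n} \<Longrightarrow> norm (gf i u - gf i v) \<le> L i * norm (u - v)"
begin

lemma subgrad_at_composite_minimizer:
  fixes \<psi> :: "'a \<Rightarrow> ereal"
  assumes pr: "proper_fun \<psi>" and cv: "convex_fun \<psi>" and fin: "\<psi> xs \<noteq> \<infinity>"
    and min: "\<And>u. ereal ((\<Sum>i=1..n. f i xs) / n) + \<psi> xs \<le> ereal ((\<Sum>i=1..n. f i u) / n) + \<psi> u"
  shows "subgrad \<psi> xs (- ((\<Sum>i=1..n. gf i xs) /\<^sub>R real n))"
proof (rule subgrad_of_minimizer[OF pr cv fin])
  show "\<psi> xs + ereal ((\<Sum>i=1..n. f i xs) / n) \<le> \<psi> u + ereal ((\<Sum>i=1..n. f i u) / n)" for u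
    using min[of u] by (simp add: add.commute)
  show "(\<Sum>i=1..n. f i (xs + d)) / n \<le> (\<Sum>i=1..n. f i xs) / n
      + inner ((\<Sum>i=1..n. gf i xs) /\<^sub>R real n) d + (\<Sum>i=1..n. L i) / (2 * n) * (norm d)\<^sup>2" for d
  proof -
    have "(\<Sum>i=1..n. f i (xs + d)) \<le> (\<Sum>i=1..n. f i xs + inner (gf i xs) d + L i / 2 * (norm d)\<^sup>2)"
      using descent_lemma[OF grad_f smooth] by (intro sum_mono) blast
    also have "\<dots> = (\<Sum>i=1..n. f i xs) + inner (\<Sum>i=1..n. gf i xs) d + (\<Sum>i=1..n. L i) / 2 * (norm d)\<^sup>2"
      by (simp add: sum.distrib inner_sum_left sum_distrib_right sum_divide_distrib)
    finally have "(\<Sum>i=1..n. f i (xs + d)) / n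
        \<le> ((\<Sum>i=1..n. f i xs) + inner (\<Sum>i=1..n. gf i xs) d + (\<Sum>i=1..n. L i) / 2 * (norm d)\<^sup>2) / n"
      by (rule divide_right_mono) simp
    then show ?thesis by (simp add: add_divide_distrib inverse_eq_divide)
  qed
  show "0 \<le> (\<Sum>i=1..n. L i) / (2 * n)"
    using L_pos by (intro divide_nonneg_nonneg sum_nonneg) (auto intro: less_imp_le)
qed

lemma sum_three_point_permuted:
  assumes perm: "\<sigma> permutes {1..n}"
  shows "inner (\<Sum>i=1..n. gf (\<sigma> i) (p i)) (x - z)
    \<ge> (\<Sum>i=1..n. f i x) - (\<Sum>i=1..n. f i z) - (\<Sum>i=1..n. L (\<sigma> i) / 2 * (norm (x - p i))\<^sup>2)
       + (\<Sum>i=1..n. (norm (gf (\<sigma> i) z - gf (\<sigma> i) (p i)))\<^sup>2 / (2 * L (\<sigma> i)))"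
proof -
  have \<sigma>: "\<sigma> i \<in> {1..n}" if "i \<in> {1..n}" for i using permutes_in_image[OF perm] that by blast
  have reindex: "(\<Sum>i=1..n. F (\<sigma> i)) = (\<Sum>i=1..n. F i)" for F :: "nat \<Rightarrow> real"
    using sum.permute[OF perm, of F] by (simp add: o_def)
  have "(\<Sum>i=1..n. f (\<sigma> i) x - f (\<sigma> i) z - L (\<sigma> i) / 2 * (norm (x - p i))\<^sup>2
          + (norm (gf (\<sigma> i) z - gf (\<sigma> i) (p i)))\<^sup>2 / (2 * L (\<sigma> i)))
      \<le> (\<Sum>i=1..n. inner (gf (\<sigma> i) (p i)) (x - z))"
    using convex_smooth_three_point[OF grad_f smooth L_pos conv_f] \<sigma> by (intro sum_mono) blast
  then show ?thesis
    using reindex[of "\<lambda>i. f i x"] reindex[of "\<lambda>i. f i z"]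
    by (simp add: sum.distrib sum_subtractf inner_sum_left)
qed

lemma proximal_shuffling_epoch_contraction:
  fixes \<psi> :: "'a \<Rightarrow> ereal" and \<eta> \<mu>f \<mu>\<psi> :: real and p :: "nat \<Rightarrow> 'a"
  assumes n: "n \<ge> 1" and pr: "proper_fun \<psi>" and cv: "convex_fun \<psi>"
    and f_strong: "\<And>u v. (\<Sum>i=1..n. f i u) / n - (\<Sum>i=1..n. f i v) / n
                     - inner ((\<Sum>i=1..n. gf i v) /\<^sub>R real n) (u - v) \<ge> \<mu>f / 2 * (norm (u - v))\<^sup>2"
    and mu_psi: "mu_condition \<psi> \<mu>\<psi>"
    and subgrad_xs: "subgrad \<psi> xs (- ((\<Sum>i=1..n. gf i xs) /\<^sub>R real n))"
    and \<eta>: "\<eta> > 0" and perm: "\<sigma> permutes {1..n}"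
    and y: "y = x - \<eta> *\<^sub>R (\<Sum>i=1..n. gf (\<sigma> i) (p i))"
    and prox: "\<And>z. ereal (real n) * \<psi> x' + ereal (1 / (2 * \<eta>) * (norm (x' - y))\<^sup>2)
        \<le> ereal (real n) * \<psi> z + ereal (1 / (2 * \<eta>) * (norm (z - y))\<^sup>2)"
  shows "(1 + n * \<eta> * (\<mu>f + 2 * \<mu>\<psi>)) * (norm (x' - xs))\<^sup>2
    \<le> (norm (x - xs))\<^sup>2 - (norm (x - x'))\<^sup>2
       + \<eta> * (\<Sum>i=1..n. L (\<sigma> i) * (norm (x' - p i))\<^sup>2)
       - \<eta> * (\<Sum>i=1..n. (norm (gf (\<sigma> i) xs - gf (\<sigma> i) (p i)))\<^sup>2 / L (\<sigma> i))"
proof -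
  define N where "N = real n"
  have N: "N > 0" using n by (simp add: N_def)
  define S where "S = (\<Sum>i=1..n. gf (\<sigma> i) (p i))"
  define gs where "gs = (\<Sum>i=1..n. gf i xs) /\<^sub>R N"
  define g' where "g' = (1 / (N * \<eta>)) *\<^sub>R (y - x')"
  define E where "E = (norm (x' - xs))\<^sup>2"
  define Fx where "Fx = (\<Sum>i=1..n. f i x')"
  define Fs where "Fs = (\<Sum>i=1..n. f i xs)"
  define Q where "Q = (\<Sum>i=1..n. L (\<sigma> i) * (norm (x' - p i))\<^sup>2)"
  define B where "B = (\<Sum>i=1..n. (norm (gf (\<sigma> i) xs - gf (\<sigma> i) (p i)))\<^sup>2 / L (\<sigma> i))"
  have three_point: "2 * inner S (x' - xs) \<ge> 2 * Fx - 2 * Fs - Q + B"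
  proof -
    have "(\<Sum>i=1..n. L (\<sigma> i) / 2 * (norm (x' - p i))\<^sup>2) = Q / 2"
      "(\<Sum>i=1..n. (norm (gf (\<sigma> i) xs - gf (\<sigma> i) (p i)))\<^sup>2 / (2 * L (\<sigma> i))) = B / 2"
      by (simp_all add: Q_def B_def sum_divide_distrib mult.commute)
    then show ?thesis
      using sum_three_point_permuted[OF perm, where p = p and x = x' and z = xs]
      unfolding S_def Fx_def Fs_def by linarith
  qed
  have strong: "Fx / N - Fs / N - inner gs (x' - xs) \<ge> \<mu>f / 2 * E"
    using f_strong[of x' xs] by (simp add: Fx_def Fs_def gs_def E_def N_def)
  have subgrad_x': "subgrad \<psi> x' g'"
    unfolding g'_def by (rule subgrad_of_prox[OF pr cv N \<eta>]) (use prox in \<open>simp add: N_def\<close>)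
  obtain P' where P': "\<psi> x' = ereal P'" using subgrad_x' by (cases "\<psi> x'") (auto simp: subgrad_def)
  obtain Ps where Ps: "\<psi> xs = ereal Ps" using subgrad_xs by (cases "\<psi> xs") (auto simp: subgrad_def)
  have psi_at_x': "P' + inner g' (xs - x') + \<mu>\<psi> / 2 * E \<le> Ps"
    using mu_conditionD[OF mu_psi subgrad_x' P' Ps] by (simp add: E_def norm_minus_commute)
  have psi_at_xs: "Ps - inner gs (x' - xs) + \<mu>\<psi> / 2 * E \<le> P'"
    using mu_conditionD[OF mu_psi subgrad_xs Ps P'] by (simp add: E_def gs_def N_def)
  have expand: "(norm (x - xs))\<^sup>2
      = (norm (x - x'))\<^sup>2 + 2 * \<eta> * inner S (x' - xs) + 2 * N * \<eta> * inner g' (x' - xs) + E"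
  proof -
    have "x - x' = \<eta> *\<^sub>R S + (N * \<eta>) *\<^sub>R g'" using N \<eta> by (simp add: y S_def g'_def)
    then have "inner (x - x') (x' - xs) = \<eta> * inner S (x' - xs) + N * \<eta> * inner g' (x' - xs)"
      by (simp add: inner_add_left)
    moreover have "(norm (x - xs))\<^sup>2 = (norm ((x - x') + (x' - xs)))\<^sup>2" by simp
    ultimately show ?thesis unfolding E_def norm_add_sq by simp
  qed
  have "2 * \<eta> * inner S (x' - xs) \<ge> 2 * \<eta> * Fx - 2 * \<eta> * Fs - \<eta> * Q + \<eta> * B"
    using mult_left_mono[OF three_point, of \<eta>] \<eta> by (simp add: algebra_simps)
  moreover have "2 * \<eta> * Fx - 2 * \<eta> * Fs - 2 * N * \<eta> * inner gs (x' - xs) \<ge> N * \<eta> * \<mu>f * E"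
    using mult_left_mono[OF strong, of "2 * N * \<eta>"] N \<eta> by (simp add: algebra_simps)
  moreover have "2 * N * \<eta> * P' - 2 * N * \<eta> * inner g' (x' - xs) + N * \<eta> * \<mu>\<psi> * E \<le> 2 * N * \<eta> * Ps"
    using mult_left_mono[OF psi_at_x', of "2 * N * \<eta>"] N \<eta>
    by (simp add: algebra_simps inner_diff_right)
  moreover have "2 * N * \<eta> * Ps - 2 * N * \<eta> * inner gs (x' - xs) + N * \<eta> * \<mu>\<psi> * E \<le> 2 * N * \<eta> * P'"
    using mult_left_mono[OF psi_at_xs, of "2 * N * \<eta>"] N \<eta> by (simp add: algebra_simps)
  moreover have "(1 + N * \<eta> * (\<mu>f + 2 * \<mu>\<psi>)) * E = E + N * \<eta> * \<mu>f * E + 2 * (N * \<eta> * \<mu>\<psi> * E)"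
    by (simp add: algebra_simps)
  ultimately have "(1 + N * \<eta> * (\<mu>f + 2 * \<mu>\<psi>)) * E
      \<le> (norm (x - xs))\<^sup>2 - (norm (x - x'))\<^sup>2 + \<eta> * Q - \<eta> * B"
    unfolding expand by linarith
  then show ?thesis by (simp add: N_def E_def Q_def B_def)
qed

lemma proximal_shuffling_epoch:
  fixes \<psi> :: "'a \<Rightarrow> ereal" and \<eta> \<mu>f \<mu>\<psi> Lm :: real and p :: "nat \<Rightarrow> 'a"
  assumes n: "n \<ge> 1" and pr: "proper_fun \<psi>" and cv: "convex_fun \<psi>"
    and f_strong: "\<And>u v. (\<Sum>i=1..n. f i u) / n - (\<Sum>i=1..n. f i v) / n
                     - inner ((\<Sum>i=1..n. gf i v) /\<^sub>R real n) (u - v) \<ge> \<mu>f / 2 * (norm (u - v))\<^sup>2"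
    and mu_psi: "mu_condition \<psi> \<mu>\<psi>"
    and subgrad_xs: "subgrad \<psi> xs (- ((\<Sum>i=1..n. gf i xs) /\<^sub>R real n))"
    and \<eta>: "\<eta> > 0"
    and step1: "2 * \<eta> * (\<Sum>i=1..n. L i) \<le> 1"
    and step2: "4 * \<eta>\<^sup>2 * n * Lm * (\<Sum>i=1..n. L i) \<le> 1"
    and Lm: "\<And>i. i \<in> {1..n} \<Longrightarrow> L i \<le> Lm"
    and perm: "\<sigma> permutes {1..n}"
    and p_start: "p 1 = x"
    and p_step: "\<And>i. i \<in> {1..n} \<Longrightarrow> p (i + 1) = p i - \<eta> *\<^sub>R gf (\<sigma> i) (p i)"
    and prox: "\<And>z. ereal (real n) * \<psi> x' + ereal (1 / (2 * \<eta>) * (norm (x' - p (n + 1)))\<^sup>2)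
        \<le> ereal (real n) * \<psi> z + ereal (1 / (2 * \<eta>) * (norm (z - p (n + 1)))\<^sup>2)"
  shows "(1 + n * \<eta> * (\<mu>f + 2 * \<mu>\<psi>)) * (norm (x' - xs))\<^sup>2 \<le> (norm (x - xs))\<^sup>2
     + 8 * n * \<eta> ^ 3 * (\<Sum>i=2..n. L (\<sigma> i) / n * (norm (\<Sum>j=1..i-1. gf (\<sigma> j) xs))\<^sup>2)"
proof -
  have \<sigma>: "\<sigma> i \<in> {1..n}" if "i \<in> {1..n}" for i using permutes_in_image[OF perm] that by blast
  define g where "g j = gf (\<sigma> j) (p j)" for j
  define h where "h j = gf (\<sigma> j) xs" for j
  define R where "R = (\<Sum>i=2..n. L (\<sigma> i) / n * (norm (\<Sum>j=1..i-1. h j))\<^sup>2)"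
  have p_eq: "p i = x - \<eta> *\<^sub>R (\<Sum>j\<in>{1..<i}. g j)" if "i \<in> {1..n}" for i
    using iterate_eq_partial_sum[of p x n \<eta> g i] p_start p_step that by (auto simp: g_def)
  have "p (n + 1) = x - \<eta> *\<^sub>R (\<Sum>i=1..n. g i)"
    using iterate_eq_partial_sum[of p x n \<eta> g "n + 1"] p_start p_step n
    by (simp add: g_def atLeastLessThanSuc_atLeastAtMost)
  then have contraction: "(1 + n * \<eta> * (\<mu>f + 2 * \<mu>\<psi>)) * (norm (x' - xs))\<^sup>2
      \<le> (norm (x - xs))\<^sup>2 - (norm (x - x'))\<^sup>2 + \<eta> * (\<Sum>i=1..n. L (\<sigma> i) * (norm (x' - p i))\<^sup>2)
        - \<eta> * (\<Sum>i=1..n. (norm (h i - g i))\<^sup>2 / L (\<sigma> i))"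
    using proximal_shuffling_epoch_contraction[OF n pr cv f_strong mu_psi subgrad_xs \<eta> perm _ prox]
    by (simp add: g_def h_def)
  have L_perm: "(\<Sum>i=1..n. L (\<sigma> i)) = (\<Sum>i=1..n. L i)"
    using sum.permute[OF perm, of L] by (simp add: o_def)
  have "\<eta> * (\<Sum>i=1..n. L (\<sigma> i) * (norm (x' - p i))\<^sup>2)
      = \<eta> * (\<Sum>i=1..n. L (\<sigma> i) * (norm (x' - (x - \<eta> *\<^sub>R (\<Sum>j\<in>{1..<i}. g j))))\<^sup>2)"
    by (simp add: p_eq)
  also have "\<dots> \<le> (norm (x - x'))\<^sup>2 + \<eta> * (\<Sum>i=1..n. (norm (h i - g i))\<^sup>2 / L (\<sigma> i))
      + 4 * \<eta> ^ 3 * (\<Sum>i=1..n. L (\<sigma> i) * (norm (\<Sum>j\<in>{1..<i}. h j))\<^sup>2)"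
    using L_pos Lm \<sigma> step1 step2 unfolding L_perm[symmetric]
    by (intro shuffling_deviation_bound[where M = Lm]) (auto simp: \<eta>)
  also have "(\<Sum>i=1..n. L (\<sigma> i) * (norm (\<Sum>j\<in>{1..<i}. h j))\<^sup>2) = n * R"
  proof -
    have "{1..n} = insert 1 {2..n}" using n by auto
    moreover have "{1..<i} = {1..i-1}" if "i \<in> {2..n}" for i using that by auto
    ultimately show ?thesis using n by (simp add: R_def sum_distrib_left)
  qed
  finally have deviation: "\<eta> * (\<Sum>i=1..n. L (\<sigma> i) * (norm (x' - p i))\<^sup>2)
      \<le> (norm (x - x'))\<^sup>2 + \<eta> * (\<Sum>i=1..n. (norm (h i - g i))\<^sup>2 / L (\<sigma> i)) + 4 * \<eta> ^ 3 * (n * R)" .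
  have "0 \<le> R" unfolding R_def
  proof (intro sum_nonneg)
    fix i assume "i \<in> {2..n}"
    then have "0 < L (\<sigma> i)" using L_pos \<sigma> by simp
    then show "0 \<le> L (\<sigma> i) / n * (norm (\<Sum>j=1..i-1. h j))\<^sup>2" by simp
  qed
  then have "4 * \<eta> ^ 3 * (n * R) \<le> 8 * n * \<eta> ^ 3 * R" using \<eta> by simp
  with contraction deviation have "(1 + n * \<eta> * (\<mu>f + 2 * \<mu>\<psi>)) * (norm (x' - xs))\<^sup>2
      \<le> (norm (x - xs))\<^sup>2 + 8 * n * \<eta> ^ 3 * R" by linarith
  then show ?thesis by (simp add: R_def h_def)
qed

end

lemma stepsize_conditions:
  fixes S M N \<eta> :: real
  assumes S: "0 < S" "S \<le> N * M" and N: "0 < N" and \<eta>: "0 < \<eta>"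
    and \<eta>_le: "\<eta> \<le> 1 / (2 * N * sqrt (S / N * M))"
  shows "2 * \<eta> * S \<le> 1" and "4 * \<eta>\<^sup>2 * N * M * S \<le> 1"
proof -
  define r where "r = sqrt (S / N * M)"
  have avg_le: "S / N \<le> M" using S N by (simp add: field_simps)
  have "0 < M" using S N by (meson zero_less_mult_pos order.strict_trans2)
  then have r: "0 < r" "r\<^sup>2 = S / N * M" using S N by (auto simp: r_def)
  have "S / N = sqrt ((S / N)\<^sup>2)" using S N by simp
  also have "\<dots> \<le> r" unfolding r_def power2_eq_square using S N avg_le
    by (intro real_sqrt_le_mono mult_left_mono) auto
  finally have avg_le_r: "S / N \<le> r" .
  have main: "2 * N * \<eta> * r \<le> 1" using \<eta>_le N r by (simp add: r_def field_simps)
  have "2 * \<eta> * S = 2 * N * \<eta> * (S / N)" using N by simp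
  also have "\<dots> \<le> 2 * N * \<eta> * r" using avg_le_r N \<eta> by (intro mult_left_mono) auto
  finally show "2 * \<eta> * S \<le> 1" using main by linarith
  have "4 * \<eta>\<^sup>2 * N * M * S = (2 * N * \<eta> * r)\<^sup>2" using N r by (simp add: power2_eq_square field_simps)
  also have "\<dots> \<le> 1" using main N \<eta> r by (simp add: power_le_one)
  finally show "4 * \<eta>\<^sup>2 * N * M * S \<le> 1" .
qed

lemma unroll_contraction_recurrence:
  fixes a c q :: "nat \<Rightarrow> real"
  assumes step: "\<And>k. k \<in> {1..K} \<Longrightarrow> q k * a (k + 1) \<le> a k + c k"
    and q_pos: "\<And>k. k \<in> {1..K} \<Longrightarrow> q k > 0"
  shows "\<forall>k \<in> {1..K}. a (k + 1) \<le> a 1 / (\<Prod>s=1..k. q s) + (\<Sum>l=1..k. c l / (\<Prod>s=l..k. q s))"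
proof
  fix k assume "k \<in> {1..K}"
  then have "1 \<le> k" "k \<le> K" by auto
  then show "a (k + 1) \<le> a 1 / (\<Prod>s=1..k. q s) + (\<Sum>l=1..k. c l / (\<Prod>s=l..k. q s))"
  proof (induction k rule: dec_induct)
    case base
    then show ?case using step[of 1] q_pos[of 1] by (simp add: field_simps)
  next
    case (step k)
    have q: "q (Suc k) > 0" using q_pos step by simp
    have prod_Suc: "(\<Prod>s=l..Suc k. q s) = (\<Prod>s=l..k. q s) * q (Suc k)" if "l \<le> Suc k" for l
      using that by (simp add: prod.cl_ivl_Suc)
    have "a (Suc k + 1) \<le> (a (Suc k) + c (Suc k)) / q (Suc k)"
      using assms(1)[of "Suc k"] step q by (simp add: field_simps)
    also have "\<dots> \<le> (a 1 / (\<Prod>s=1..k. q s) + (\<Sum>l=1..k. c l / (\<Prod>s=l..k. q s)) + c (Suc k)) / q (Suc k)"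
      using step q by (intro divide_right_mono) auto
    also have "\<dots> = a 1 / (\<Prod>s=1..Suc k. q s) + (\<Sum>l=1..Suc k. c l / (\<Prod>s=l..Suc k. q s))"
      using prod_Suc[of 1]
      by (simp add: sum.cl_ivl_Suc prod_Suc sum_divide_distrib add_divide_distrib)
    finally show ?case by simp
  qed
qed

theorem mainTheorem10:
  fixes n K :: nat
    and f :: "nat \<Rightarrow> 'a::euclidean_space \<Rightarrow> real"
    and gf :: "nat \<Rightarrow> 'a \<Rightarrow> 'a"
    and \<psi> :: "'a \<Rightarrow> ereal"
    and L :: "nat \<Rightarrow> real"
    and \<mu>f \<mu>\<psi> :: real
    and xs :: 'a
    and x :: "nat \<Rightarrow> 'a"
    and xin :: "nat \<Rightarrow> nat \<Rightarrow> 'a"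
    and \<eta> :: "nat \<Rightarrow> real"
    and \<sigma> :: "nat \<Rightarrow> nat \<Rightarrow> nat"
  assumes n_pos: "n \<ge> 1"
    and conv_f: "\<And>i. i \<in> {1..n} \<Longrightarrow> convex_on UNIV (f i)"
    and grad_f: "\<And>i z. i \<in> {1..n} \<Longrightarrow> GDERIV (f i) z :> gf i z"
    and L_pos: "\<And>i. i \<in> {1..n} \<Longrightarrow> L i > 0"
    and smooth: "\<And>i u v. i \<in> {1..n} \<Longrightarrow> norm (gf i u - gf i v) \<le> L i * norm (u - v)"
    and psi_proper: "proper_fun \<psi>"
    and psi_closed: "closed_fun \<psi>"
    and psi_convex: "convex_fun \<psi>"
    and mu_f: "\<mu>f \<ge> 0"
    and f_strong: "\<And>u v. (\<Sum>i=1..n. f i u) / n - (\<Sum>i=1..n. f i v) / n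
                     - inner ((\<Sum>i=1..n. gf i v) /\<^sub>R real n) (u - v)
                     \<ge> \<mu>f / 2 * (norm (u - v))\<^sup>2"
    and mu_psi: "mu_condition \<psi> \<mu>\<psi>"
    and xs_min: "\<And>u. ereal ((\<Sum>i=1..n. f i xs) / n) + \<psi> xs
                      \<le> ereal ((\<Sum>i=1..n. f i u) / n) + \<psi> u"
    and xs_dom: "\<psi> xs \<noteq> \<infinity>"
    and K_ge: "K \<ge> 2"
    and x1_dom: "\<psi> (x 1) \<noteq> \<infinity>"
    and eta_pos: "\<And>k. k \<in> {1..K} \<Longrightarrow> \<eta> k > 0"
    and eta_le: "\<And>k. k \<in> {1..K} \<Longrightarrow>
        \<eta> k \<le> 1 / (2 * n * sqrt (((\<Sum>i=1..n. L i) / n) * Max (L ` {1..n})))"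
    and perm: "\<And>k. k \<in> {1..K} \<Longrightarrow> \<sigma> k permutes {1..n}"
    and inner_start: "\<And>k. k \<in> {1..K} \<Longrightarrow> xin k 1 = x k"
    and inner_step: "\<And>k i. k \<in> {1..K} \<Longrightarrow> i \<in> {1..n} \<Longrightarrow>
        xin k (i + 1) = xin k i - \<eta> k *\<^sub>R gf (\<sigma> k i) (xin k i)"
    and prox: "\<And>k z. k \<in> {1..K} \<Longrightarrow>
        ereal (real n) * \<psi> (x (k + 1)) + ereal (1 / (2 * \<eta> k) * (norm (x (k + 1) - xin k (n + 1)))\<^sup>2)
        \<le> ereal (real n) * \<psi> z + ereal (1 / (2 * \<eta> k) * (norm (z - xin k (n + 1)))\<^sup>2)"
  shows "\<forall>k \<in> {1..K}.
    (norm (x (k + 1) - xs))\<^sup>2 \<le>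
      (norm (xs - x 1))\<^sup>2 / (\<Prod>s=1..k. 1 + n * \<eta> s * (\<mu>f + 2 * \<mu>\<psi>))
      + (\<Sum>l=1..k. 8 * n * \<eta> l ^ 3
           * (\<Sum>i=2..n. L (\<sigma> l i) / n * (norm (\<Sum>j=1..i-1. gf (\<sigma> l j) xs))\<^sup>2)
           / (\<Prod>s=l..k. 1 + n * \<eta> s * (\<mu>f + 2 * \<mu>\<psi>)))"
proof -
  define Lm where "Lm = Max (L ` {1..n})"
  have Lm: "L i \<le> Lm" if "i \<in> {1..n}" for i unfolding Lm_def using that by (intro Max_ge) auto
  have sum_L: "0 < (\<Sum>i=1..n. L i)" "(\<Sum>i=1..n. L i) \<le> n * Lm"
    using n_pos L_pos sum_bounded_above[of "{1..n}" L Lm] Lm by (auto intro: sum_pos)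
  have steps: "2 * \<eta> k * (\<Sum>i=1..n. L i) \<le> 1" "4 * (\<eta> k)\<^sup>2 * n * Lm * (\<Sum>i=1..n. L i) \<le> 1"
    if "k \<in> {1..K}" for k
    using stepsize_conditions[OF sum_L _ eta_pos[OF that]] eta_le[OF that] n_pos by (simp_all add: Lm_def)
  have subgrad_xs: "subgrad \<psi> xs (- ((\<Sum>i=1..n. gf i xs) /\<^sub>R real n))"
    by (rule subgrad_at_composite_minimizer[OF conv_f grad_f L_pos smooth psi_proper psi_convex xs_dom xs_min])
  have epoch: "(1 + n * \<eta> k * (\<mu>f + 2 * \<mu>\<psi>)) * (norm (x (k + 1) - xs))\<^sup>2 \<le> (norm (x k - xs))\<^sup>2
      + 8 * n * \<eta> k ^ 3 * (\<Sum>i=2..n. L (\<sigma> k i) / n * (norm (\<Sum>j=1..i-1. gf (\<sigma> k j) xs))\<^sup>2)"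
    if k: "k \<in> {1..K}" for k
    by (rule proximal_shuffling_epoch[OF conv_f grad_f L_pos smooth n_pos psi_proper psi_convex
          f_strong mu_psi subgrad_xs eta_pos[OF k] steps[OF k] Lm perm[OF k]
          inner_start[OF k] inner_step[OF k] prox[OF k]])
  have contraction_pos: "1 + n * \<eta> k * (\<mu>f + 2 * \<mu>\<psi>) > 0" if "k \<in> {1..K}" for k
    using eta_pos[OF that] mu_f mu_psi unfolding mu_condition_def
    by (intro add_pos_nonneg mult_nonneg_nonneg) auto
  show ?thesis
    using unroll_contraction_recurrence[where a = "\<lambda>k. (norm (x k - xs))\<^sup>2" and K = K, OF epoch contraction_pos]
    by (simp add: norm_minus_commute)
qed

end
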